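(* Let $k=4$, $p\in\mathbb{S}^n$, $R\in(0,\pi/2)$, $B_R=\{q:\mathbf{d}_p(q)\le R\}$, $y\in\partial B_R$, and $\gamma:[R,\pi]\to\mathbb{S}^n$ the unit-speed minimizing geodesic from $y$ to $-p$ with $\mathbf{d}_p(\gamma(s))=s$. Define on $B_R\setminus\{y\}$ \[Z=\Psi_y+\int_R^\pi h(s)\Psi_{\gamma(s)}\,ds,\qquad h(s):=\frac{\cos R}{\sin^2R}\sin s.\] Then at every point of $\partial B_R\setminus\{y\}$, \[-3\tan R\,\langle Z,\nabla\mathbf{d}_p\rangle=1+\int_R^\pi h(s)\,ds.\]
   Context: $\mathbb{S}^n$ is the unit round sphere with Levi-Civita connection $\nabla$; $\mathbf{d}_q$ is geodesic distance from $q$. With $k=4$: $I_k(r)=\int_0^r\sin^{k-1}s\,ds$, $\varphi(t)=I_k(t)\sin^{1-k}t$ for $t\in(0,\pi)$, $\varphi(0)=0$, $\Phi_q=(\varphi\circ\mathbf{d}_q)\nabla\mathbf{d}_q$ on $\mathbb{S}^n\setminus\{-q\}$, and $\Psi_q:=\Phi_{-q}$ on $\mathbb{S}^n\setminus\{q\}$. *)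

theory Defs
  imports "HOL-Analysis.Analysis"
begin

text \<open>The unit round sphere S^n is modelled as sphere 0 1 in a Euclidean space 'a
 (DIM('a) = n+1). Geodesic distance on the unit sphere.\<close>
definition sdist :: "'a::euclidean_space \<Rightarrow> 'a \<Rightarrow> real" where
  "sdist q x = arccos (q \<bullet> x)"

text \<open>Riemannian gradient (w.r.t. the induced round metric) of f at x on the sphere:
 the tangent vector v at x with d f_x (w) = v . w on tangent vectors.\<close>
definition sgrad :: "('a::euclidean_space \<Rightarrow> real) \<Rightarrow> 'a \<Rightarrow> 'a" where
  "sgrad f x = (SOME v. v \<bullet> x = 0 \<and>
      (f has_derivative (\<lambda>w. v \<bullet> w)) (at x within sphere 0 1))"

definition Ik :: "nat \<Rightarrow> real \<Rightarrow> real" where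
  "Ik k r = integral {0..r} (\<lambda>s. sin s ^ (k - 1))"

definition phik :: "nat \<Rightarrow> real \<Rightarrow> real" where
  "phik k t = (if t = 0 then 0 else Ik k t / sin t ^ (k - 1))"

definition Phi :: "'a::euclidean_space \<Rightarrow> 'a \<Rightarrow> 'a" where
  "Phi q x = phik 4 (sdist q x) *\<^sub>R sgrad (sdist q) x"

definition Psi :: "'a::euclidean_space \<Rightarrow> 'a \<Rightarrow> 'a" where
  "Psi q x = Phi (- q) x"

end

theory Submission
  imports Defs
begin

text \<open>In ambient coordinates everything is explicit: for unit vectors,
  \<open>\<Psi>\<^sub>q(x) = (2 - q\<bullet>x) / (3 (1 - q\<bullet>x)\<^sup>2) (q - (q\<bullet>x) x)\<close> and
  \<open>\<nabla>d\<^sub>p(x) = - (p - (p\<bullet>x) x) / sin d\<^sub>p(x)\<close>. The geodesic \<open>\<gamma>\<close> runs along the great circle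
  \<open>s \<mapsto> cos s p + sin s u\<close> through \<open>p\<close> and \<open>y\<close>, so on the sphere \<open>p\<bullet>x = cos R\<close> the
  pairing \<open>\<langle>\<Psi>\<^bsub>\<gamma>(s)\<^esub>(x), \<nabla>d\<^sub>p(x)\<rangle>\<close> is a rational function of \<open>cos s\<close> and \<open>sin s\<close>.
  It has an explicit primitive, and its integral over \<open>[R, \<pi>]\<close> cancels the
  \<open>x\<close>-dependence of the contribution of \<open>\<Psi>\<^sub>y\<close>.\<close>

section \<open>Spherical distance and its gradient\<close>

lemma unit_inner_eq_1_imp_eq:
  fixes q x :: "'a::real_inner"
  assumes "norm q = 1" "norm x = 1" "q \<bullet> x = 1"
  shows "x = q"
proof -
  have "x \<bullet> x = 1" "q \<bullet> q = 1"
    using assms(1,2) by (simp_all add: dot_square_norm)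
  then have "(norm (x - q))\<^sup>2 = 0"
    using assms(3) by (simp add: power2_norm_eq_inner inner_diff_left inner_diff_right inner_commute
        flip: dot_square_norm)
  then show ?thesis
    by simp
qed

lemma inner_eq_cos_sdist:
  fixes a b :: "'a::euclidean_space"
  assumes "norm a = 1" "norm b = 1"
  shows "a \<bullet> b = cos (sdist a b)"
proof -
  have "\<bar>a \<bullet> b\<bar> \<le> 1"
    using Cauchy_Schwarz_ineq2[of a b] assms by simp
  then show ?thesis
    by (simp add: sdist_def cos_arccos_abs)
qed

lemma tangential_gradient_unique:
  fixes x v v' :: "'a::euclidean_space"
  assumes x: "norm x = 1" and "v \<bullet> x = 0" and "v' \<bullet> x = 0"
    and f: "(f has_derivative (\<lambda>w. v \<bullet> w)) (at x within sphere 0 1)"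
    and f': "(f has_derivative (\<lambda>w. v' \<bullet> w)) (at x within sphere 0 1)"
  shows "v = v'"
proof (rule ccontr)
  assume "v \<noteq> v'"
  define e where "e = (1 / norm (v - v')) *\<^sub>R (v - v')"
  have "e \<bullet> x = 0"
    using assms(2,3) by (simp add: e_def inner_diff_left)
  have "x \<bullet> x = 1" "e \<bullet> e = 1"
    using x \<open>v \<noteq> v'\<close> by (simp_all add: e_def dot_square_norm)
  \<comment> \<open>Both gradients differentiate \<open>f\<close> along this great circle, whose velocity at \<open>x\<close> is \<open>e\<close>.\<close>
  define c where "c = (\<lambda>t::real. cos t *\<^sub>R x + sin t *\<^sub>R e)"
  have "c ` UNIV \<subseteq> sphere 0 1"
  proof clarify
    fix t
    have "c t \<bullet> c t = 1"
      using \<open>x \<bullet> x = 1\<close> \<open>e \<bullet> e = 1\<close> \<open>e \<bullet> x = 0\<close> sin_cos_squared_add[of t]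
      by (simp add: c_def inner_add_left inner_add_right inner_commute power2_eq_square)
    then show "c t \<in> sphere 0 1"
      by (simp add: norm_eq_sqrt_inner)
  qed
  have c: "(c has_derivative (\<lambda>t. t *\<^sub>R e)) (at 0)"
    unfolding c_def by (auto intro!: derivative_eq_intros)
  have "c 0 = x"
    by (simp add: c_def)
  have "((f \<circ> c) has_derivative (\<lambda>t. t * (u \<bullet> e))) (at 0)"
    if "(f has_derivative (\<lambda>w. u \<bullet> w)) (at x within sphere 0 1)" for u
    using diff_chain_within[OF c has_derivative_subset[OF that[folded \<open>c 0 = x\<close>]]]
      \<open>c ` UNIV \<subseteq> sphere 0 1\<close>
    by (simp add: comp_def)
  from has_derivative_unique[OF this[OF f] this[OF f']]
  have "v \<bullet> e = v' \<bullet> e"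
    by (metis mult_1)
  then have "(v - v') \<bullet> (v - v') = 0"
    using \<open>v \<noteq> v'\<close> by (simp add: e_def inner_diff_left)
  then show False
    using \<open>v \<noteq> v'\<close> by simp
qed

lemma sgrad_eqI:
  fixes x v :: "'a::euclidean_space"
  assumes "norm x = 1" "v \<bullet> x = 0"
    and "(f has_derivative (\<lambda>w. v \<bullet> w)) (at x within sphere 0 1)"
  shows "sgrad f x = v"
  unfolding sgrad_def by (rule some_equality) (use assms in \<open>auto intro: tangential_gradient_unique\<close>)

lemma sgrad_sdist:
  fixes q x :: "'a::euclidean_space"
  assumes "norm q = 1" "norm x = 1" "\<bar>q \<bullet> x\<bar> < 1"
  shows "sgrad (sdist q) x = - (1 / sqrt (1 - (q \<bullet> x)\<^sup>2)) *\<^sub>R (q - (q \<bullet> x) *\<^sub>R x)"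
proof (rule sgrad_eqI)
  have "x \<bullet> x = 1"
    using assms(2) by (simp add: dot_square_norm)
  then show "(- (1 / sqrt (1 - (q \<bullet> x)\<^sup>2)) *\<^sub>R (q - (q \<bullet> x) *\<^sub>R x)) \<bullet> x = 0"
    by (simp add: inner_diff_left)
  \<comment> \<open>The extension \<open>z \<mapsto> arccos (q \<bullet> z / |z|)\<close> is constant along rays, so its gradient
    at \<open>x\<close> is already tangential.\<close>
  have inner_normalized: "((\<lambda>z. q \<bullet> z / sqrt (z \<bullet> z)) has_derivative
      (\<lambda>w. (q - (q \<bullet> x) *\<^sub>R x) \<bullet> w)) (at x)"
    by (rule derivative_eq_intros refl | simp add: \<open>x \<bullet> x = 1\<close>)+
       (auto simp: inner_diff_left inner_commute algebra_simps)
  have arccos: "(arccos has_real_derivative - (1 / sqrt (1 - (q \<bullet> x)\<^sup>2)))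
      (at (q \<bullet> x / sqrt (x \<bullet> x)))"
    using DERIV_arccos[of "q \<bullet> x"] assms(3) by (simp add: \<open>x \<bullet> x = 1\<close> abs_less_iff inverse_eq_divide)
  have "((\<lambda>z. arccos (q \<bullet> z / sqrt (z \<bullet> z))) has_derivative
      (\<lambda>w. - (1 / sqrt (1 - (q \<bullet> x)\<^sup>2)) * ((q - (q \<bullet> x) *\<^sub>R x) \<bullet> w))) (at x)"
    using has_derivative_compose[OF inner_normalized arccos[unfolded has_field_derivative_def]] .
  then have "((\<lambda>z. arccos (q \<bullet> z / sqrt (z \<bullet> z))) has_derivative
      (\<lambda>w. (- (1 / sqrt (1 - (q \<bullet> x)\<^sup>2)) *\<^sub>R (q - (q \<bullet> x) *\<^sub>R x)) \<bullet> w)) (at x within sphere 0 1)"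
    unfolding inner_scaleR_left by (rule has_derivative_at_withinI)
  then show "(sdist q has_derivative
      (\<lambda>w. (- (1 / sqrt (1 - (q \<bullet> x)\<^sup>2)) *\<^sub>R (q - (q \<bullet> x) *\<^sub>R x)) \<bullet> w)) (at x within sphere 0 1)"
    by (rule has_derivative_transform_within[where d = 1])
       (use assms(2) in \<open>auto simp: sdist_def dot_square_norm\<close>)
qed (fact assms(2))

section \<open>The vector field \<open>\<Psi>\<close> in ambient coordinates\<close>

lemma Ik_4:
  assumes "0 \<le> t"
  shows "Ik 4 t = 2/3 - cos t + cos t ^ 3 / 3"
proof -
  have "((\<lambda>s. sin s ^ 3) has_integral ((- cos t + cos t ^ 3 / 3) - (- cos 0 + cos 0 ^ 3 / 3))) {0..t}"
  proof (rule fundamental_theorem_of_calculus[OF assms])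
    fix s :: real
    have "((\<lambda>s. - cos s + cos s ^ 3 / 3) has_real_derivative sin s ^ 3) (at s)"
      by (rule derivative_eq_intros refl | simp)+ (use sin_cos_squared_add[of s] in algebra)
    then show "((\<lambda>s. - cos s + cos s ^ 3 / 3) has_vector_derivative sin s ^ 3) (at s within {0..t})"
      by (simp add: has_real_derivative_iff_has_vector_derivative[symmetric] has_field_derivative_at_within)
  qed
  then show ?thesis
    unfolding Ik_def by (simp add: integral_unique)
qed

lemma Psi_eq:
  fixes q x :: "'a::euclidean_space"
  assumes q: "norm q = 1" and x: "norm x = 1" and "x \<noteq> q"
  shows "Psi q x = ((2 - q \<bullet> x) / (3 * (1 - q \<bullet> x)\<^sup>2)) *\<^sub>R (q - (q \<bullet> x) *\<^sub>R x)"
proof (cases "x = - q")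
  case True
  \<comment> \<open>Both sides vanish: \<open>sdist (- q) x = 0\<close> and \<open>phik 4 0 = 0\<close>.\<close>
  have "q \<bullet> q = 1"
    using q by (simp add: dot_square_norm)
  with True show ?thesis
    by (simp add: Psi_def Phi_def sdist_def phik_def)
next
  case False
  define c where "c = q \<bullet> x"
  have "c \<noteq> 1" "c \<noteq> -1"
    using unit_inner_eq_1_imp_eq[OF q x] unit_inner_eq_1_imp_eq[of "-q" x] q x \<open>x \<noteq> q\<close> False
    by (auto simp: c_def)
  moreover have "\<bar>c\<bar> \<le> 1"
    using Cauchy_Schwarz_ineq2[of q x] q x by (simp add: c_def)
  ultimately have c: "\<bar>c\<bar> < 1"
    by linarith
  define t where "t = sdist (- q) x"
  have t: "t = arccos (- c)"
    by (simp add: t_def sdist_def c_def)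
  have "cos t = - c" "sin t = sqrt (1 - c\<^sup>2)"
    unfolding t using c by (simp_all add: cos_arccos sin_arccos)
  have "0 \<le> t"
    unfolding t using c by (simp add: arccos_lbound)
  moreover have "t \<noteq> 0"
    using \<open>cos t = - c\<close> \<open>c \<noteq> -1\<close> by auto
  ultimately have "0 < t"
    by simp
  have "1 - c\<^sup>2 > 0"
    using c by (simp add: abs_square_less_1)
  then have "sqrt (1 - c\<^sup>2) ^ 3 * sqrt (1 - c\<^sup>2) = (1 - c\<^sup>2)\<^sup>2"
    by (simp add: power3_eq_cube power2_eq_square real_sqrt_mult[symmetric] mult.assoc)
  then have "phik 4 t * (1 / sqrt (1 - c\<^sup>2)) = (2/3 + c - c ^ 3 / 3) / (1 - c\<^sup>2)\<^sup>2"
    using \<open>0 < t\<close> by (simp add: phik_def Ik_4 \<open>cos t = - c\<close> \<open>sin t = sqrt (1 - c\<^sup>2)\<close>)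
  also have "\<dots> = (2 - c) / (3 * (1 - c)\<^sup>2)"
  proof -
    have "1 - c \<noteq> 0" "1 + c \<noteq> 0" "1 - c\<^sup>2 \<noteq> 0"
      using \<open>c \<noteq> 1\<close> \<open>c \<noteq> -1\<close> by (auto simp: power2_eq_1_iff)
    then show ?thesis
      by (simp add: field_simps) algebra
  qed
  finally have "phik 4 t * (1 / sqrt (1 - c\<^sup>2)) = (2 - c) / (3 * (1 - c)\<^sup>2)" .
  moreover have "sgrad (sdist (- q)) x = (1 / sqrt (1 - c\<^sup>2)) *\<^sub>R (q - c *\<^sub>R x)"
    using sgrad_sdist[of "- q" x] q x c by (simp add: c_def algebra_simps)
  ultimately show ?thesis
    by (simp add: Psi_def Phi_def t_def[symmetric] c_def[symmetric])
qed

lemma Psi_inner_sgrad_sdist: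
  fixes p q x :: "'a::euclidean_space"
  assumes "norm p = 1" "norm q = 1" "norm x = 1" "\<bar>p \<bullet> x\<bar> < 1" "x \<noteq> q"
  shows "Psi q x \<bullet> sgrad (sdist p) x
    = - ((2 - q \<bullet> x) * (p \<bullet> q - (p \<bullet> x) * (q \<bullet> x)) / (3 * sqrt (1 - (p \<bullet> x)\<^sup>2) * (1 - q \<bullet> x)\<^sup>2))"
proof -
  have "x \<bullet> x = 1"
    using assms(3) by (simp add: dot_square_norm)
  then have "(q - (q \<bullet> x) *\<^sub>R x) \<bullet> (p - (p \<bullet> x) *\<^sub>R x) = p \<bullet> q - (p \<bullet> x) * (q \<bullet> x)"
    by (simp add: inner_diff_left inner_diff_right inner_commute algebra_simps)
  then show ?thesis
    using assms by (simp add: Psi_eq sgrad_sdist)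
qed

section \<open>An elementary integral\<close>

lemma flux_primitive_identity:
  fixes A B c d :: real
  assumes "c\<^sup>2 + d\<^sup>2 = A\<^sup>2 + B\<^sup>2" and "c \<noteq> 1"
  shows "A * B * ((2 - (A\<^sup>2 + B\<^sup>2)) * - c - 2 * ((A\<^sup>2 + B\<^sup>2 - c) / (1 - c)\<^sup>2))
      + (B\<^sup>2 - A\<^sup>2 + A\<^sup>2 * (A\<^sup>2 + B\<^sup>2)) * (d / (1 - c)\<^sup>2 - d)
    = (B * c - A * d) * (A * c + B * d - A * (A\<^sup>2 + B\<^sup>2) * c) * (2 - c) / (1 - c)\<^sup>2"
proof -
  have "1 - c \<noteq> 0"
    using assms(2) by simp
  then show ?thesis
    using assms(1) by (simp add: field_simps) algebra
qed

text \<open>A primitive of \<open>(A\<^sup>2 + B\<^sup>2)\<^sup>2 sin s (cos s - A c) (2 - c) / (1 - c)\<^sup>2\<close> with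
  \<open>c = A cos s + B sin s\<close>, found by writing the integrand as a rational function of \<open>c\<close> and
  \<open>d = c'\<close>, where \<open>d' = - c\<close> and \<open>c\<^sup>2 + d\<^sup>2 = A\<^sup>2 + B\<^sup>2\<close>.\<close>
definition flux_primitive :: "real \<Rightarrow> real \<Rightarrow> real \<Rightarrow> real" where
  "flux_primitive A B s =
    (let c = A * cos s + B * sin s; d = B * cos s - A * sin s
     in A * B * ((2 - (A\<^sup>2 + B\<^sup>2)) * d - 2 * (d / (1 - c)))
        + (B\<^sup>2 - A\<^sup>2 + A\<^sup>2 * (A\<^sup>2 + B\<^sup>2)) * (1 / (1 - c) - c))"

lemma has_real_derivative_flux_primitive:
  fixes A B s :: real
  defines "c \<equiv> \<lambda>s. A * cos s + B * sin s"
  assumes "c s \<noteq> 1"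
  shows "(flux_primitive A B has_real_derivative
      (A\<^sup>2 + B\<^sup>2)\<^sup>2 * (sin s * (cos s - A * c s) * (2 - c s) / (1 - c s)\<^sup>2)) (at s)"
proof -
  let ?D = "A\<^sup>2 + B\<^sup>2"
  define d where "d = (\<lambda>s. B * cos s - A * sin s)"
  have F: "flux_primitive A B = (\<lambda>s. A * B * ((2 - ?D) * d s - 2 * (d s / (1 - c s)))
      + (B\<^sup>2 - A\<^sup>2 + A\<^sup>2 * ?D) * (1 / (1 - c s) - c s))"
    by (simp add: fun_eq_iff flux_primitive_def Let_def c_def d_def)
  have u: "1 - c s \<noteq> 0"
    using assms by simp
  have pyth: "(c s)\<^sup>2 + (d s)\<^sup>2 = ?D"
    using sin_cos_squared_add[of s] unfolding c_def d_def by algebra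
  have dc: "(c has_real_derivative d s) (at s)" and dd: "(d has_real_derivative - c s) (at s)"
    unfolding c_def d_def by (auto intro!: derivative_eq_intros simp: algebra_simps)
  have "((\<lambda>s. d s / (1 - c s)) has_real_derivative (?D - c s) / (1 - c s)\<^sup>2) (at s)"
    by (rule derivative_eq_intros dc dd refl)+
       (use u pyth in \<open>simp_all add: field_simps power2_eq_square\<close>)
  moreover have "((\<lambda>s. 1 / (1 - c s)) has_real_derivative d s / (1 - c s)\<^sup>2) (at s)"
    by (rule derivative_eq_intros dc refl)+
       (use u in \<open>simp_all add: field_simps power2_eq_square\<close>)
  ultimately have F': "(flux_primitive A B has_real_derivative
      (B * c s - A * d s) * (A * c s + B * d s - A * ?D * c s) * (2 - c s) / (1 - c s)\<^sup>2) (at s)"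
    unfolding F flux_primitive_identity[OF pyth assms(2), symmetric]
    by (intro DERIV_add DERIV_cmult DERIV_diff dc dd)
  have sinD: "?D * sin s = B * c s - A * d s" and cosD: "?D * cos s = A * c s + B * d s"
    unfolding c_def d_def using sin_cos_squared_add[of s] by algebra+
  have "?D\<^sup>2 * (sin s * (cos s - A * c s) * (2 - c s) / (1 - c s)\<^sup>2)
      = (?D * sin s) * (?D * cos s - A * ?D * c s) * (2 - c s) / (1 - c s)\<^sup>2"
    by (simp add: power2_eq_square algebra_simps)
  also have "\<dots> = (B * c s - A * d s) * (A * c s + B * d s - A * ?D * c s) * (2 - c s) / (1 - c s)\<^sup>2"
    by (simp only: sinD cosD)
  finally show ?thesis
    using F' by (simp only:)
qed

lemma flux_primitive_endpoints:
  fixes R B :: real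
  defines "t \<equiv> cos R * cos R + B * sin R"
  assumes "cos R \<noteq> -1" and "t \<noteq> 1"
  shows "flux_primitive (cos R) B pi - flux_primitive (cos R) B R
    = ((cos R)\<^sup>2 + B\<^sup>2)\<^sup>2 * (cos R * (cos R + 1) - (sin R)\<^sup>2 / (1 - t))"
proof -
  define A S D K where "A = cos R" and "S = sin R" and "D = A\<^sup>2 + B\<^sup>2"
    and "K = B\<^sup>2 - A\<^sup>2 + A\<^sup>2 * D"
  define u v where "u = 1 - t" and "v = 1 + A"
  have "u \<noteq> 0" "v \<noteq> 0"
    using assms(2,3) by (auto simp: u_def v_def A_def)
  have "flux_primitive (cos R) B pi = A * B * ((2 - D) * - B - 2 * (- B / v)) + K * (1 / v + A)"
    by (simp add: flux_primitive_def Let_def A_def D_def K_def v_def)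
  moreover have "flux_primitive (cos R) B R
      = A * B * ((2 - D) * (B * A - A * S) - 2 * ((B * A - A * S) / u)) + K * (1 / u - t)"
    by (simp add: flux_primitive_def Let_def A_def S_def D_def K_def u_def t_def)
  moreover have "A\<^sup>2 + S\<^sup>2 = 1"
    by (simp add: A_def S_def)
  then have "A * B * (- (2 - D) * B * v * u + 2 * B * u) + K * (u + A * u * v)
    - A * B * (2 - D) * (B * A - A * S) * u * v + 2 * A * B * (B * A - A * S) * v - K * v + K * t * u * v
   = D\<^sup>2 * (A * (A + 1) * u - S\<^sup>2) * v"
    unfolding D_def K_def t_def u_def v_def A_def[symmetric] S_def[symmetric] by algebra
  ultimately show ?thesis
    using \<open>u \<noteq> 0\<close> \<open>v \<noteq> 0\<close>
    unfolding A_def[symmetric] S_def[symmetric] D_def[symmetric] u_def[symmetric]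
    by (simp add: field_simps) algebra
qed

lemma flux_integral:
  fixes R B :: real
  defines "c \<equiv> \<lambda>s. cos R * cos s + B * sin s"
  assumes "0 < cos R" and "R \<le> pi" and "\<forall>s\<in>{R..pi}. c s \<noteq> 1"
  shows "((\<lambda>s. sin s * (cos s - cos R * c s) * (2 - c s) / (1 - c s)\<^sup>2) has_integral
      cos R * (cos R + 1) - (sin R)\<^sup>2 / (1 - c R)) {R..pi}"
proof -
  define D where "D = (cos R)\<^sup>2 + B\<^sup>2"
  have primitive: "((\<lambda>s. D\<^sup>2 * (sin s * (cos s - cos R * c s) * (2 - c s) / (1 - c s)\<^sup>2))
      has_integral flux_primitive (cos R) B pi - flux_primitive (cos R) B R) {R..pi}"
  proof (rule fundamental_theorem_of_calculus)
    fix s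
    assume "s \<in> {R..pi}"
    then show "(flux_primitive (cos R) B has_vector_derivative
        D\<^sup>2 * (sin s * (cos s - cos R * c s) * (2 - c s) / (1 - c s)\<^sup>2)) (at s within {R..pi})"
      using has_real_derivative_flux_primitive[where A = "cos R" and B = B and s = s] assms(4)
      unfolding D_def c_def
      by (simp add: has_real_derivative_iff_has_vector_derivative[symmetric] has_field_derivative_at_within)
  qed (fact assms(3))
  have "cos R \<noteq> -1" "c R \<noteq> 1"
    using assms(2-4) by auto
  then have endpoints: "flux_primitive (cos R) B pi - flux_primitive (cos R) B R
      = D\<^sup>2 * (cos R * (cos R + 1) - (sin R)\<^sup>2 / (1 - c R))"
    unfolding D_def c_def by (rule flux_primitive_endpoints)
  have "D\<^sup>2 \<noteq> 0"
    using assms(2) by (simp add: D_def add_pos_nonneg)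
  then show ?thesis
    using primitive[unfolded endpoints has_integral_mult_right_iff[OF \<open>D\<^sup>2 \<noteq> 0\<close>]] by simp
qed

section \<open>Great circles\<close>

definition great_circle :: "'a::real_vector \<Rightarrow> 'a \<Rightarrow> real \<Rightarrow> 'a" where
  "great_circle p u s = cos s *\<^sub>R p + sin s *\<^sub>R u"

lemma
  fixes p u :: "'a::real_inner"
  assumes "norm p = 1" "norm u = 1" "p \<bullet> u = 0"
  shows inner_great_circle_left: "p \<bullet> great_circle p u s = cos s"
    and norm_great_circle: "norm (great_circle p u s) = 1"
proof -
  have "p \<bullet> p = 1" "u \<bullet> u = 1" "u \<bullet> p = 0"
    using assms by (simp_all add: dot_square_norm inner_commute)
  then show "p \<bullet> great_circle p u s = cos s"
    using assms(3) by (simp add: great_circle_def inner_add_right)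
  have "great_circle p u s \<bullet> great_circle p u s = (cos s)\<^sup>2 + (sin s)\<^sup>2"
    using \<open>p \<bullet> p = 1\<close> \<open>u \<bullet> u = 1\<close> \<open>u \<bullet> p = 0\<close> assms(3)
    by (simp add: great_circle_def inner_add_left inner_add_right power2_eq_square)
  then show "norm (great_circle p u s) = 1"
    by (simp add: norm_eq_sqrt_inner)
qed

lemma great_circle_eqI:
  fixes p u g :: "'a::real_inner"
  assumes "norm p = 1" "norm u = 1" "p \<bullet> u = 0"
    and "norm g = 1" "p \<bullet> g = cos s" "u \<bullet> g = sin s"
  shows "g = great_circle p u s"
proof -
  have "g \<bullet> great_circle p u s = 1"
    using assms(5,6) sin_cos_squared_add[of s]
    by (simp add: great_circle_def inner_add_right inner_commute power2_eq_square)
  moreover have "g \<bullet> g = 1" "great_circle p u s \<bullet> great_circle p u s = 1"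
    using assms(4) norm_great_circle[OF assms(1-3)] by (simp_all add: dot_square_norm)
  ultimately have "(g - great_circle p u s) \<bullet> (g - great_circle p u s) = 0"
    by (simp add: inner_diff_left inner_diff_right inner_commute)
  then show ?thesis
    by simp
qed

lemma geodesic_eq_great_circle:
  fixes p y :: "'a::real_inner" and \<gamma> :: "real \<Rightarrow> 'a"
  assumes p: "norm p = 1" and y: "norm y = 1" and "p \<bullet> y = cos R" and "sin R \<noteq> 0"
    and \<gamma>: "\<And>s. s \<in> S \<Longrightarrow> norm (\<gamma> s) = 1 \<and> p \<bullet> \<gamma> s = cos s \<and> y \<bullet> \<gamma> s = cos (s - R)"
  defines "u \<equiv> (1 / sin R) *\<^sub>R (y - cos R *\<^sub>R p)"
  shows "norm u = 1" and "p \<bullet> u = 0" and "y = great_circle p u R"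
    and "\<And>s. s \<in> S \<Longrightarrow> \<gamma> s = great_circle p u s"
proof -
  have "p \<bullet> p = 1" "y \<bullet> y = 1"
    using p y by (simp_all add: dot_square_norm)
  then show "p \<bullet> u = 0"
    using \<open>p \<bullet> y = cos R\<close> by (simp add: u_def inner_diff_right)
  have "(y - cos R *\<^sub>R p) \<bullet> (y - cos R *\<^sub>R p) = (sin R)\<^sup>2"
    using \<open>p \<bullet> p = 1\<close> \<open>y \<bullet> y = 1\<close> \<open>p \<bullet> y = cos R\<close> sin_cos_squared_add[of R]
    by (simp add: inner_diff_left inner_diff_right inner_commute power2_eq_square)
  then have "u \<bullet> u = 1"
    using \<open>sin R \<noteq> 0\<close> by (simp add: u_def power2_eq_square)
  then show "norm u = 1"
    by (simp add: norm_eq_sqrt_inner)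
  then show "y = great_circle p u R"
    using \<open>sin R \<noteq> 0\<close> by (simp add: great_circle_def u_def)
  fix s
  assume "s \<in> S"
  have "u \<bullet> \<gamma> s = (cos (s - R) - cos R * cos s) / sin R"
    using \<gamma>[OF \<open>s \<in> S\<close>] by (simp add: u_def inner_diff_left)
  also have "\<dots> = sin s"
    using \<open>sin R \<noteq> 0\<close> by (simp add: cos_diff)
  finally show "\<gamma> s = great_circle p u s"
    using great_circle_eqI \<gamma>[OF \<open>s \<in> S\<close>] p \<open>norm u = 1\<close> \<open>p \<bullet> u = 0\<close> by blast
qed

text \<open>A point \<open>x\<close> of the boundary sphere \<open>d\<^sub>p = R\<close> other than \<open>y = great_circle p u R\<close>;
  on \<open>[R, \<pi>]\<close> the great circle is the geodesic from \<open>y\<close> to \<open>-p\<close>.\<close>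
locale boundary_point =
  fixes p u x :: "'a::euclidean_space" and R :: real
  assumes norm_p: "norm p = 1" and norm_u: "norm u = 1" and orthogonal: "p \<bullet> u = 0"
    and R_pos: "0 < R" and R_less: "R < pi / 2"
    and norm_x: "norm x = 1" and inner_p_x: "p \<bullet> x = cos R"
    and x_neq: "x \<noteq> great_circle p u R"
begin

lemma sin_R_pos: "0 < sin R" and cos_R_pos: "0 < cos R"
  using R_pos R_less by (auto intro: sin_gt_zero cos_gt_zero_pi)

lemma great_circle_inner_x: "great_circle p u s \<bullet> x = cos R * cos s + (u \<bullet> x) * sin s"
  using inner_p_x by (simp add: great_circle_def inner_add_left algebra_simps)

lemma great_circle_inner_x_neq_1:
  assumes "s \<in> {R..pi}"
  shows "great_circle p u s \<bullet> x \<noteq> 1"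
proof
  assume "great_circle p u s \<bullet> x = 1"
  then have "x = great_circle p u s"
    by (rule unit_inner_eq_1_imp_eq[OF norm_great_circle[OF norm_p norm_u orthogonal] norm_x])
  then have "cos s = cos R"
    using inner_p_x inner_great_circle_left[OF norm_p norm_u orthogonal, of s] by simp
  then have "s = R"
    using cos_inj_pi[of s R] assms R_pos R_less pi_gt_zero by simp
  then show False
    using x_neq \<open>x = great_circle p u s\<close> by simp
qed

lemma Psi_great_circle_inner_sgrad:
  assumes "s \<in> {R..pi}"
  defines "c \<equiv> great_circle p u s \<bullet> x"
  shows "Psi (great_circle p u s) x \<bullet> sgrad (sdist p) x
    = - ((2 - c) * (cos s - cos R * c) / (3 * sin R * (1 - c)\<^sup>2))"
proof -
  have "(cos R)\<^sup>2 < 1"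
    using sin_R_pos by (simp add: cos_squared_eq)
  then have "\<bar>p \<bullet> x\<bar> < 1"
    by (simp add: inner_p_x abs_square_less_1[symmetric])
  moreover have "x \<noteq> great_circle p u s"
    using great_circle_inner_x_neq_1[OF assms(1)] norm_x by (auto simp: dot_square_norm)
  ultimately have "Psi (great_circle p u s) x \<bullet> sgrad (sdist p) x
      = - ((2 - c) * (p \<bullet> great_circle p u s - (p \<bullet> x) * c) / (3 * sqrt (1 - (p \<bullet> x)\<^sup>2) * (1 - c)\<^sup>2))"
    unfolding c_def
    by (rule Psi_inner_sgrad_sdist[OF norm_p norm_great_circle[OF norm_p norm_u orthogonal] norm_x])
  moreover have "sqrt (1 - (cos R)\<^sup>2) = sin R"
    using sin_R_pos by (simp flip: sin_squared_eq)
  ultimately show ?thesis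
    by (simp only: inner_p_x inner_great_circle_left[OF norm_p norm_u orthogonal])
qed

lemma integral_Psi_great_circle_inner_sgrad:
  "integral {R..pi} (\<lambda>s. (cos R / (sin R)\<^sup>2 * sin s) *\<^sub>R Psi (great_circle p u s) x)
      \<bullet> sgrad (sdist p) x
    = - (cos R / (3 * sin R ^ 3))
      * (cos R * (cos R + 1) - (sin R)\<^sup>2 / (1 - great_circle p u R \<bullet> x))"
proof -
  let ?c = "\<lambda>s. great_circle p u s \<bullet> x"
  have gc: "norm (great_circle p u s) = 1" for s
    by (rule norm_great_circle[OF norm_p norm_u orthogonal])
  have x_neq_gc: "x \<noteq> great_circle p u s" if "s \<in> {R..pi}" for s
    using great_circle_inner_x_neq_1[OF that] norm_x by (auto simp: dot_square_norm)
  have "continuous_on {R..pi} (\<lambda>s. (cos R / (sin R)\<^sup>2 * sin s) *\<^sub>R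
      (((2 - ?c s) / (3 * (1 - ?c s)\<^sup>2)) *\<^sub>R (great_circle p u s - ?c s *\<^sub>R x)))"
    using great_circle_inner_x_neq_1 unfolding great_circle_def
    by (intro continuous_intros) auto
  then have cont: "continuous_on {R..pi}
      (\<lambda>s. (cos R / (sin R)\<^sup>2 * sin s) *\<^sub>R Psi (great_circle p u s) x)"
    by (rule continuous_on_eq) (simp add: Psi_eq[OF gc norm_x x_neq_gc])
  have "integral {R..pi} (\<lambda>s. (cos R / (sin R)\<^sup>2 * sin s) *\<^sub>R Psi (great_circle p u s) x)
      \<bullet> sgrad (sdist p) x
    = integral {R..pi} (\<lambda>s. (cos R / (sin R)\<^sup>2 * sin s) * (Psi (great_circle p u s) x \<bullet> sgrad (sdist p) x))"
    by (simp only: integral_component_eq[OF integrable_continuous_interval[OF cont], symmetric]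
        inner_scaleR_left)
  also have "\<dots> = integral {R..pi} (\<lambda>s. - (cos R / (3 * sin R ^ 3))
      * (sin s * (cos s - cos R * ?c s) * (2 - ?c s) / (1 - ?c s)\<^sup>2))"
    using sin_R_pos by (intro integral_cong) (simp add: Psi_great_circle_inner_sgrad field_simps power3_eq_cube power2_eq_square)
  also have "\<dots> = - (cos R / (3 * sin R ^ 3)) * (cos R * (cos R + 1) - (sin R)\<^sup>2 / (1 - ?c R))"
  proof (rule integral_unique, rule has_integral_mult_right)
    have "R \<le> pi"
      using R_less pi_gt_zero by linarith
    then show "((\<lambda>s. sin s * (cos s - cos R * ?c s) * (2 - ?c s) / (1 - ?c s)\<^sup>2) has_integral
        cos R * (cos R + 1) - (sin R)\<^sup>2 / (1 - ?c R)) {R..pi}"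
      using flux_integral[where R = R and B = "u \<bullet> x"] cos_R_pos great_circle_inner_x_neq_1
      unfolding great_circle_inner_x by blast
  qed
  finally show ?thesis .
qed

lemma boundary_identity:
  "- 3 * tan R * ((Psi (great_circle p u R) x
      + integral {R..pi} (\<lambda>s. (cos R / (sin R)\<^sup>2 * sin s) *\<^sub>R Psi (great_circle p u s) x))
      \<bullet> sgrad (sdist p) x)
    = 1 + integral {R..pi} (\<lambda>s. cos R / (sin R)\<^sup>2 * sin s)"
proof -
  define w where "w = 1 - great_circle p u R \<bullet> x"
  have "R \<le> pi"
    using R_less pi_gt_zero by linarith
  then have "w \<noteq> 0"
    using great_circle_inner_x_neq_1[of R] by (simp add: w_def)
  have "great_circle p u R \<bullet> x = 1 - w"
    by (simp add: w_def)
  then have Psi_R: "Psi (great_circle p u R) x \<bullet> sgrad (sdist p) x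
      = - ((1 + w) * (cos R - cos R * (1 - w)) / (3 * sin R * w\<^sup>2))"
    using Psi_great_circle_inner_sgrad[of R] \<open>R \<le> pi\<close>
    by (simp add: inner_great_circle_left[OF norm_p norm_u orthogonal])
  have h: "integral {R..pi} (\<lambda>s. cos R / (sin R)\<^sup>2 * sin s) = cos R * (cos R + 1) / (sin R)\<^sup>2"
    using \<open>R \<le> pi\<close> by (simp add: add_divide_distrib)
  show ?thesis
    unfolding inner_add_left Psi_R integral_Psi_great_circle_inner_sgrad h w_def[symmetric]
    using sin_R_pos cos_R_pos \<open>w \<noteq> 0\<close>
    by (simp add: tan_def field_simps power2_eq_square power3_eq_cube)
       (use sin_cos_squared_add[of R] in algebra)
qed

end

theorem lemma3p2:
  fixes p y :: "'a::euclidean_space" and R :: real and \<gamma> :: "real \<Rightarrow> 'a"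
  assumes "norm p = 1"
    and "0 < R" "R < pi / 2"
    and "norm y = 1" "sdist p y = R"
    and "\<forall>s\<in>{R..pi}. norm (\<gamma> s) = 1"
    and "\<gamma> R = y" "\<gamma> pi = - p"
    and "\<forall>s\<in>{R..pi}. \<forall>t\<in>{R..pi}. sdist (\<gamma> s) (\<gamma> t) = \<bar>s - t\<bar>"
    and "\<forall>s\<in>{R..pi}. sdist p (\<gamma> s) = s"
  shows "\<forall>x. norm x = 1 \<and> sdist p x = R \<and> x \<noteq> y \<longrightarrow>
    (let h = (\<lambda>s. cos R / (sin R)\<^sup>2 * sin s);
         Z = Psi y x + integral {R..pi} (\<lambda>s. h s *\<^sub>R Psi (\<gamma> s) x)
     in - 3 * tan R * (Z \<bullet> sgrad (sdist p) x) = 1 + integral {R..pi} h)"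
proof (intro allI impI)
  fix x :: 'a
  assume x: "norm x = 1 \<and> sdist p x = R \<and> x \<noteq> y"
  have "R \<in> {R..pi}" "sin R \<noteq> 0"
    using assms(2,3) pi_gt_zero sin_gt_zero[of R] by auto
  have \<gamma>: "norm (\<gamma> s) = 1 \<and> p \<bullet> \<gamma> s = cos s \<and> y \<bullet> \<gamma> s = cos (s - R)" if "s \<in> {R..pi}" for s
  proof -
    have "sdist y (\<gamma> s) = s - R"
      using assms(7,9) that \<open>R \<in> {R..pi}\<close> by force
    then show ?thesis
      using that inner_eq_cos_sdist[of p "\<gamma> s"] inner_eq_cos_sdist[of y "\<gamma> s"] assms(1,4,6,10)
      by simp
  qed
  have "p \<bullet> y = cos R"
    using inner_eq_cos_sdist[of p y] assms(1,4,5) by simp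
  define u where "u = (1 / sin R) *\<^sub>R (y - cos R *\<^sub>R p)"
  note great_circle = geodesic_eq_great_circle[where S = "{R..pi}",
      OF assms(1,4) \<open>p \<bullet> y = cos R\<close> \<open>sin R \<noteq> 0\<close> \<gamma>, folded u_def]
  interpret boundary_point p u x R
    using great_circle assms(1-3) x inner_eq_cos_sdist[of p x] by unfold_locales auto
  have "integral {R..pi} (\<lambda>s. (cos R / (sin R)\<^sup>2 * sin s) *\<^sub>R Psi (\<gamma> s) x)
      = integral {R..pi} (\<lambda>s. (cos R / (sin R)\<^sup>2 * sin s) *\<^sub>R Psi (great_circle p u s) x)"
    using great_circle(4) by (intro integral_cong) simp
  then show "let h = (\<lambda>s. cos R / (sin R)\<^sup>2 * sin s);
         Z = Psi y x + integral {R..pi} (\<lambda>s. h s *\<^sub>R Psi (\<gamma> s) x)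
     in - 3 * tan R * (Z \<bullet> sgrad (sdist p) x) = 1 + integral {R..pi} h"
    using boundary_identity great_circle(3) by (simp add: Let_def)
qed

end
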